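(* Let $\mathbb{A}_f$ be the ring of finite adeles of $\mathbf{Q}$, $\widehat{\mathbf{Z}}=\prod_p\mathbf{Z}_p$, and regard $\mathbb{A}_f$ as a commutative monoid under multiplication. The multiplication descends to the double quotient $\mathbf{Q}^\times\backslash\mathbb{A}_f/\widehat{\mathbf{Z}}^\times$. Let $\operatorname{Pic}(\operatorname{Spec}\mathbf{Z})$ be the set of arithmetic divisors $\sum_p n_p[p]$ (with $n_p\in\mathbf{Z}\cup\{+\infty\}$, $n_p<0$ for finitely many $p$) modulo linear equivalence ($D\sim D'$ iff $D=D'-\sum_p v_p(q)[p]$ for some $q\in\mathbf{Q}^\times$), with the monoid structure induced by coefficientwise addition (convention $\infty+k=\infty$). Then the map \[ \Phi:\mathbf{Q}^\times\backslash\mathbb{A}_f/\widehat{\mathbf{Z}}^\times\longrightarrow \operatorname{Pic}(\operatorname{Spec}\mathbf{Z}),\qquad [(a_p)_p]\longmapsto \Big[\sum_p v_p(a_p)[p]\Big] \] (with $v_p(0)=\infty$) is an isomorphism of commutative monoids: it is bijective and sends multiplication of finite adeles to addition of divisors. *)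

theory Defs
  imports Complex_Main "HOL-Computational_Algebra.Primes"
begin

datatype zinf = ZFin int | ZInf

fun zadd :: "zinf \<Rightarrow> zinf \<Rightarrow> zinf" where
  "zadd (ZFin a) (ZFin b) = ZFin (a + b)"
| "zadd _ _ = ZInf"

fun zneg :: "zinf \<Rightarrow> bool" where
  "zneg (ZFin a) = (a < 0)"
| "zneg ZInf = False"

definition rat_pval :: "nat \<Rightarrow> rat \<Rightarrow> int" where
  "rat_pval p q = (case quotient_of q of (a, b) \<Rightarrow>
      int (multiplicity (int p) a) - int (multiplicity (int p) b))"

text \<open>Cauchy sequences for |.|_p, written via the valuation: |x|_p < p^(-k) iff x = 0 or v_p(x) > k.\<close>
definition padic_cauchy :: "nat \<Rightarrow> (nat \<Rightarrow> rat) \<Rightarrow> bool" where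
  "padic_cauchy p X \<longleftrightarrow> (\<forall>k::int. \<exists>N. \<forall>m\<ge>N. \<forall>n\<ge>N. X m = X n \<or> rat_pval p (X m - X n) \<ge> k)"

definition padic_null :: "nat \<Rightarrow> (nat \<Rightarrow> rat) \<Rightarrow> bool" where
  "padic_null p X \<longleftrightarrow> (\<forall>k::int. \<exists>N. \<forall>n\<ge>N. X n = 0 \<or> rat_pval p (X n) \<ge> k)"

definition padic_rel :: "nat \<Rightarrow> ((nat \<Rightarrow> rat) \<times> (nat \<Rightarrow> rat)) set" where
  "padic_rel p = {(X, Y). padic_cauchy p X \<and> padic_cauchy p Y \<and> padic_null p (\<lambda>n. X n - Y n)}"

definition Qp :: "nat \<Rightarrow> (nat \<Rightarrow> rat) set set" where
  "Qp p = {X. padic_cauchy p X} // padic_rel p"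

definition qp_of_rat :: "nat \<Rightarrow> rat \<Rightarrow> (nat \<Rightarrow> rat) set" where
  "qp_of_rat p q = padic_rel p `` {(\<lambda>n. q)}"

definition qp_mult :: "nat \<Rightarrow> (nat \<Rightarrow> rat) set \<Rightarrow> (nat \<Rightarrow> rat) set \<Rightarrow> (nat \<Rightarrow> rat) set" where
  "qp_mult p c d = padic_rel p `` {(\<lambda>n. (SOME X. X \<in> c) n * (SOME Y. Y \<in> d) n)}"

definition qp_val :: "nat \<Rightarrow> (nat \<Rightarrow> rat) set \<Rightarrow> zinf" where
  "qp_val p c = (if (\<lambda>n. 0) \<in> c then ZInf
     else ZFin (THE k. \<exists>N. \<forall>n\<ge>N. (SOME X. X \<in> c) n \<noteq> 0 \<and> rat_pval p ((SOME X. X \<in> c) n) = k))"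

definition Zp :: "nat \<Rightarrow> (nat \<Rightarrow> rat) set set" where
  "Zp p = {c \<in> Qp p. \<not> zneg (qp_val p c)}"

definition Zp_units :: "nat \<Rightarrow> (nat \<Rightarrow> rat) set set" where
  "Zp_units p = {c \<in> Qp p. qp_val p c = ZFin 0}"

text \<open>A finite adele is a family (a_p) indexed by primes p with a_p in Q_p and a_p in Z_p for
  all but finitely many p; at non-prime indices the component is normalised to the empty set.\<close>
type_synonym adele = "nat \<Rightarrow> (nat \<Rightarrow> rat) set"

definition finite_adeles :: "adele set" where
  "finite_adeles = {a. (\<forall>p. prime p \<longrightarrow> a p \<in> Qp p) \<and> (\<forall>n. \<not> prime n \<longrightarrow> a n = {})
                      \<and> finite {p. prime p \<and> a p \<notin> Zp p}}"

definition Zhat_units :: "adele set" where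
  "Zhat_units = {u. (\<forall>p. prime p \<longrightarrow> u p \<in> Zp_units p) \<and> (\<forall>n. \<not> prime n \<longrightarrow> u n = {})}"

definition adele_mult :: "adele \<Rightarrow> adele \<Rightarrow> adele" where
  "adele_mult a b = (\<lambda>p. if prime p then qp_mult p (a p) (b p) else {})"

definition adele_of_rat :: "rat \<Rightarrow> adele" where
  "adele_of_rat q = (\<lambda>p. if prime p then qp_of_rat p q else {})"

definition adele_rel :: "(adele \<times> adele) set" where
  "adele_rel = {(a, b). a \<in> finite_adeles \<and> b \<in> finite_adeles \<and>
      (\<exists>q u. q \<noteq> 0 \<and> u \<in> Zhat_units \<and> b = adele_mult (adele_mult (adele_of_rat q) a) u)}"

definition adele_classes :: "adele set set" where
  "adele_classes = finite_adeles // adele_rel"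

definition class_mult :: "adele set \<Rightarrow> adele set \<Rightarrow> adele set" where
  "class_mult X Y = adele_rel `` {adele_mult (SOME a. a \<in> X) (SOME b. b \<in> Y)}"

definition class_one :: "adele set" where
  "class_one = adele_rel `` {adele_of_rat 1}"

type_synonym divisor = "nat \<Rightarrow> zinf"

definition divisors :: "divisor set" where
  "divisors = {D. (\<forall>n. \<not> prime n \<longrightarrow> D n = ZFin 0) \<and> finite {p. prime p \<and> zneg (D p)}}"

definition div_add :: "divisor \<Rightarrow> divisor \<Rightarrow> divisor" where
  "div_add D E = (\<lambda>p. zadd (D p) (E p))"

definition lin_equiv :: "(divisor \<times> divisor) set" where
  "lin_equiv = {(D, D'). D \<in> divisors \<and> D' \<in> divisors \<and>
      (\<exists>q::rat. q \<noteq> 0 \<and> (\<forall>p. prime p \<longrightarrow> D p = zadd (D' p) (ZFin (- rat_pval p q))))}"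

definition Pic :: "divisor set set" where
  "Pic = divisors // lin_equiv"

definition pic_add :: "divisor set \<Rightarrow> divisor set \<Rightarrow> divisor set" where
  "pic_add X Y = lin_equiv `` {div_add (SOME D. D \<in> X) (SOME E. E \<in> Y)}"

definition pic_zero :: "divisor set" where
  "pic_zero = lin_equiv `` {(\<lambda>p. ZFin 0)}"

definition divisor_of_adele :: "adele \<Rightarrow> divisor" where
  "divisor_of_adele a = (\<lambda>p. if prime p then qp_val p (a p) else ZFin 0)"

text \<open>Phi on a double coset: the union of the divisor classes of all representatives
  (this is a single class exactly when Phi is well defined).\<close>
definition Phi :: "adele set \<Rightarrow> divisor set" where
  "Phi X = (\<Union>a\<in>X. lin_equiv `` {divisor_of_adele a})"

end

(*
  At each prime p the valuation v_p : Q_p -> Z \<union> {\<infinity>} is multiplicative and surjective, and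
  two elements of Q_p with the same valuation differ by a unit of Z_p.  Hence a \<mapsto> \<Sum> v_p(a_p)[p]
  maps the finite adeles onto the arithmetic divisors, turns products into sums, and two adeles
  lie in the same double coset iff their divisors differ by the principal divisor of some
  q \<in> Q^x: units have valuation 0, and conversely the local units can be chosen prime by prime.
  So the double coset relation is the pullback of linear equivalence along the divisor map,
  and Phi is the bijection of quotients it induces.
*)
theory Submission
  imports Defs "HOL-Computational_Algebra.Squarefree"
begin

section \<open>Quotients by a pulled-back equivalence relation\<close>

lemma some_in_equiv_class:
  assumes "equiv A R" "x \<in> A" shows "(x, SOME y. y \<in> R``{x}) \<in> R"
  using someI[of "\<lambda>y. y \<in> R``{x}", OF equiv_class_self[OF assms]] by simp

lemma equiv_class_of_op_on_some_reps:
  assumes "equiv A R" "x \<in> A" "y \<in> A"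
    and "\<And>x x' y y'. (x, x') \<in> R \<Longrightarrow> (y, y') \<in> R \<Longrightarrow> (h x y, h x' y') \<in> R"
  shows "R``{h (SOME x'. x' \<in> R``{x}) (SOME y'. y' \<in> R``{y})} = R``{h x y}"
  using assms(4)[OF some_in_equiv_class[OF assms(1,2)] some_in_equiv_class[OF assms(1,3)]]
  by (simp add: equiv_class_eq[OF assms(1)])

lemma equiv_pullback:
  assumes "equiv B S" "f ` A \<subseteq> B" "\<And>a b. (a, b) \<in> R \<longleftrightarrow> a \<in> A \<and> b \<in> A \<and> (f a, f b) \<in> S"
  shows "equiv A R"
proof (rule equivI)
  show "R \<subseteq> A \<times> A" using assms(3) by auto
  show "refl_on A R"
    using assms equiv_class_self[OF assms(1)] by (auto simp: refl_on_def)
  show "sym R"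
    using assms(1,3) by (auto simp: sym_def elim: equivE)
  show "trans R"
    using assms(1,3) unfolding trans_def by (meson equivE transE)
qed

lemma UN_pullback_class:
  assumes "equiv B S" "f ` A \<subseteq> B" "\<And>a b. (a, b) \<in> R \<longleftrightarrow> a \<in> A \<and> b \<in> A \<and> (f a, f b) \<in> S"
    and "a \<in> A"
  shows "(\<Union>x\<in>R``{a}. S``{f x}) = S``{f a}"
proof (rule UN_equiv_class[OF equiv_pullback[OF assms(1-3)] _ assms(4)])
  show "(\<lambda>x. S``{f x}) respects R"
    unfolding congruent_def using assms(3) equiv_class_eq[OF assms(1)] by blast
qed

lemma bij_betw_pullback_quotients:
  assumes "equiv B S" "f ` A = B" "\<And>a b. (a, b) \<in> R \<longleftrightarrow> a \<in> A \<and> b \<in> A \<and> (f a, f b) \<in> S"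
  shows "bij_betw (\<lambda>X. \<Union>x\<in>X. S``{f x}) (A//R) (B//S)"
proof -
  have image_class: "(\<Union>x\<in>R``{a}. S``{f x}) = S``{f a}" if "a \<in> A" for a
    using UN_pullback_class[OF assms(1) _ assms(3) that] assms(2) by blast
  show ?thesis
  proof (rule bij_betw_imageI)
    show "inj_on (\<lambda>X. \<Union>x\<in>X. S``{f x}) (A//R)"
    proof (rule inj_onI)
      fix X Y assume "X \<in> A//R" "Y \<in> A//R" and eq: "(\<Union>x\<in>X. S``{f x}) = (\<Union>x\<in>Y. S``{f x})"
      then obtain a b where ab: "a \<in> A" "b \<in> A" "X = R``{a}" "Y = R``{b}"
        by (auto elim!: quotientE)
      with eq have "S``{f a} = S``{f b}"
        using image_class by simp
      then have "(a, b) \<in> R"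
        using eq_equiv_class_iff[OF assms(1)] assms(2,3) ab(1,2) by blast
      with ab show "X = Y"
        using equiv_class_eq[OF equiv_pullback[OF assms(1) _ assms(3)]] assms(2) by blast
    qed
    have "(\<lambda>X. \<Union>x\<in>X. S``{f x}) ` (A//R) = (\<lambda>a. S``{f a}) ` A"
      unfolding quotient_def using image_class by auto
    also have "\<dots> = B//S"
      unfolding quotient_def using assms(2) by auto
    finally show "(\<lambda>X. \<Union>x\<in>X. S``{f x}) ` (A//R) = B//S" .
  qed
qed

section \<open>The p-adic valuation on \<rat>\<close>

lemma rat_pval_of_int_div:
  assumes "prime p" "a \<noteq> 0" "b \<noteq> 0"
  shows "rat_pval p (of_int a / of_int b) = int (multiplicity (int p) a) - int (multiplicity (int p) b)"
proof -
  obtain a' b' where q: "quotient_of (of_int a / of_int b) = (a', b')"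
    by (cases "quotient_of (of_int a / of_int b :: rat)")
  have e: "(of_int a / of_int b :: rat) = of_int a' / of_int b'" and b': "b' > 0"
    using quotient_of_div[OF q] quotient_of_denom_pos[OF q] by simp_all
  with assms have a': "a' \<noteq> 0" by auto
  from e assms b' have "a * b' = a' * b"
    by (simp add: field_simps flip: of_int_mult of_int_eq_iff)
  then have "multiplicity (int p) a + multiplicity (int p) b'
      = multiplicity (int p) a' + multiplicity (int p) b"
    using assms a' b'
    by (metis prime_elem_multiplicity_mult_distrib prime_nat_int_transfer prime_imp_prime_elem less_irrefl)
  then show ?thesis by (simp add: rat_pval_def q)
qed

lemma rat_as_int_fraction:
  fixes x :: rat assumes "x \<noteq> 0" obtains a b :: int where "a \<noteq> 0" "b \<noteq> 0" "x = of_int a / of_int b"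
proof -
  obtain a b where q: "quotient_of x = (a, b)" by fastforce
  then have "x = of_int a / of_int b" "b > 0" by (simp_all add: quotient_of_div quotient_of_denom_pos)
  with assms that show thesis by fastforce
qed

lemma rat_pval_mult:
  assumes "prime p" "x \<noteq> 0" "y \<noteq> 0"
  shows "rat_pval p (x * y) = rat_pval p x + rat_pval p y"
proof -
  obtain a b where ab: "a \<noteq> 0" "b \<noteq> 0" "x = of_int a / of_int b"
    using assms(2) by (rule rat_as_int_fraction)
  obtain c d where cd: "c \<noteq> 0" "d \<noteq> 0" "y = of_int c / of_int d"
    using assms(3) by (rule rat_as_int_fraction)
  let ?\<mu> = "multiplicity (int p)"
  have "x * y = of_int (a * c) / of_int (b * d)" using ab cd by simp
  then have "rat_pval p (x * y) = int (?\<mu> (a * c)) - int (?\<mu> (b * d))"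
    using rat_pval_of_int_div[OF assms(1), of "a * c" "b * d"] ab cd by simp
  moreover have "rat_pval p x = int (?\<mu> a) - int (?\<mu> b)" "rat_pval p y = int (?\<mu> c) - int (?\<mu> d)"
    using rat_pval_of_int_div[OF assms(1)] ab cd by simp_all
  ultimately show ?thesis
    using assms ab cd by (simp add: prime_elem_multiplicity_mult_distrib)
qed

lemma rat_pval_1 [simp]: "rat_pval p 1 = 0"
  by (simp add: rat_pval_def)

lemma rat_pval_minus:
  assumes "prime p" shows "rat_pval p (- x) = rat_pval p x"
proof (cases "x = 0")
  case False
  then obtain a b where ab: "a \<noteq> 0" "b \<noteq> 0" "x = of_int a / of_int b" by (rule rat_as_int_fraction)
  have "rat_pval p (of_int (- a) / of_int b) = rat_pval p (of_int a / of_int b)"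
    using rat_pval_of_int_div[OF assms, of "- a" b] rat_pval_of_int_div[OF assms ab(1,2)] ab(1,2)
    by (simp only: multiplicity_uminus_right neg_equal_0_iff_equal simp_thms)
  with ab(3) show ?thesis by simp
qed simp

lemma rat_pval_inverse:
  assumes "prime p" "x \<noteq> 0" shows "rat_pval p (inverse x) = - rat_pval p x"
  using rat_pval_mult[OF assms(1), of x "inverse x"] assms by simp

lemma rat_pval_add_ge:
  assumes "prime p" "x \<noteq> 0" "y \<noteq> 0" "x + y \<noteq> 0"
  shows "min (rat_pval p x) (rat_pval p y) \<le> rat_pval p (x + y)"
proof -
  obtain a b where ab: "a \<noteq> 0" "b \<noteq> 0" "x = of_int a / of_int b"
    using assms(2) by (rule rat_as_int_fraction)
  obtain c d where cd: "c \<noteq> 0" "d \<noteq> 0" "y = of_int c / of_int d"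
    using assms(3) by (rule rat_as_int_fraction)
  let ?\<mu> = "multiplicity (int p)"
  have xy: "x + y = of_int (a * d + c * b) / of_int (b * d)" using ab cd by (simp add: field_simps)
  with assms(4) have nz: "a * d + c * b \<noteq> 0" by (metis div_0 of_int_0)
  let ?m = "min (?\<mu> (a * d)) (?\<mu> (c * b))"
  have "int p ^ ?m dvd a * d" "int p ^ ?m dvd c * b" by (simp_all add: multiplicity_dvd')
  then have "?m \<le> ?\<mu> (a * d + c * b)"
    using assms(1) nz by (intro multiplicity_geI) (auto simp: prime_gt_1_nat)
  moreover have "rat_pval p (x + y) = int (?\<mu> (a * d + c * b)) - int (?\<mu> (b * d))"
    using xy rat_pval_of_int_div[OF assms(1) nz, of "b * d"] ab cd by simp
  moreover have "rat_pval p x = int (?\<mu> a) - int (?\<mu> b)" "rat_pval p y = int (?\<mu> c) - int (?\<mu> d)"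
    using rat_pval_of_int_div[OF assms(1)] ab cd by simp_all
  ultimately show ?thesis
    using assms(1) ab cd by (simp add: prime_elem_multiplicity_mult_distrib)
qed

lemma ex_rat_pval_eq:
  assumes "prime p" shows "\<exists>x. x \<noteq> 0 \<and> rat_pval p x = k"
proof -
  have "prime_elem (int p)" using assms by (simp add: prime_imp_prime_elem)
  then have pow: "rat_pval p (of_nat (p ^ n)) = int n" for n
    unfolding rat_pval_def quotient_of_rat_of_nat
    by (simp del: of_nat_power add: of_nat_power [where 'a = int])
  show ?thesis
  proof (cases "k \<ge> 0")
    case True
    with pow[of "nat k"] assms show ?thesis by (intro exI[of _ "of_nat (p ^ nat k)"]) auto
  next
    case False
    with pow[of "nat (- k)"] assms show ?thesis
      by (intro exI[of _ "inverse (of_nat (p ^ nat (- k)))"]) (auto simp: rat_pval_inverse)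
  qed
qed

text \<open>\<open>pval_ge p k x\<close> encodes \<open>|x|\<^sub>p \<le> p\<^sup>-\<^sup>k\<close>, with the convention
  \<open>v\<^sub>p(0) = \<infinity>\<close>.\<close>
definition pval_ge :: "nat \<Rightarrow> int \<Rightarrow> rat \<Rightarrow> bool" where
  "pval_ge p k x \<longleftrightarrow> x = 0 \<or> k \<le> rat_pval p x"

lemma pval_ge_0 [simp]: "pval_ge p k 0"
  by (simp add: pval_ge_def)

lemma pval_ge_rat_pval [simp]: "pval_ge p (rat_pval p x) x"
  by (simp add: pval_ge_def)

lemma pval_ge_mono: "pval_ge p k x \<Longrightarrow> j \<le> k \<Longrightarrow> pval_ge p j x"
  by (auto simp: pval_ge_def)

lemma pval_ge_minus: "prime p \<Longrightarrow> pval_ge p k (- x) \<longleftrightarrow> pval_ge p k x"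
  by (simp add: pval_ge_def rat_pval_minus)

lemma pval_ge_add: "prime p \<Longrightarrow> pval_ge p k x \<Longrightarrow> pval_ge p k y \<Longrightarrow> pval_ge p k (x + y)"
  using rat_pval_add_ge[of p x y] by (fastforce simp: pval_ge_def)

lemma pval_ge_mult: "prime p \<Longrightarrow> pval_ge p k x \<Longrightarrow> pval_ge p j y \<Longrightarrow> pval_ge p (k + j) (x * y)"
  unfolding pval_ge_def by (cases "x = 0 \<or> y = 0") (auto simp: rat_pval_mult)

lemma rat_pval_add_eq:
  assumes "prime p" "x \<noteq> 0" "rat_pval p x < k" "pval_ge p k y"
  shows "x + y \<noteq> 0 \<and> rat_pval p (x + y) = rat_pval p x"
proof -
  have y: "pval_ge p (rat_pval p x + 1) y" "pval_ge p (rat_pval p x + 1) (- y)"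
    using assms by (simp_all add: pval_ge_minus pval_ge_mono)
  show ?thesis
  proof (intro conjI)
    show nz: "x + y \<noteq> 0"
      using y(2) assms(2) by (auto simp: pval_ge_def add_eq_0_iff)
    have "pval_ge p (rat_pval p x) (x + y)"
      using y(1) by (intro pval_ge_add assms(1) pval_ge_rat_pval) (auto elim: pval_ge_mono)
    moreover have "\<not> pval_ge p (rat_pval p x + 1) (x + y)"
      using pval_ge_add[OF assms(1) _ y(2), of "x + y"] assms(2) by (auto simp: pval_ge_def)
    ultimately show "rat_pval p (x + y) = rat_pval p x"
      using nz by (auto simp: pval_ge_def)
  qed
qed

section \<open>p-adic Cauchy sequences and the valuation on \<open>\<rat>\<^sub>p\<close>\<close>

lemma padic_cauchy_iff: "padic_cauchy p X \<longleftrightarrow> (\<forall>k. \<exists>N. \<forall>m\<ge>N. \<forall>n\<ge>N. pval_ge p k (X m - X n))"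
  by (simp add: padic_cauchy_def pval_ge_def)

lemma padic_null_iff: "padic_null p X \<longleftrightarrow> (\<forall>k. \<forall>\<^sub>F n in sequentially. pval_ge p k (X n))"
  by (simp add: padic_null_def pval_ge_def eventually_sequentially)

lemma padic_cauchy_const: "padic_cauchy p (\<lambda>n. c)"
  by (simp add: padic_cauchy_iff)

lemma padic_cauchy_bounded:
  assumes "prime p" "padic_cauchy p X" obtains B where "\<forall>\<^sub>F n in sequentially. pval_ge p B (X n)"
proof -
  obtain N where N: "\<forall>m\<ge>N. \<forall>n\<ge>N. pval_ge p 0 (X m - X n)"
    using assms(2) unfolding padic_cauchy_iff by blast
  let ?B = "min 0 (rat_pval p (X N))"
  have "pval_ge p ?B (X n - X N + X N)" if "n \<ge> N" for n
  proof (rule pval_ge_add[OF assms(1)])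
    show "pval_ge p ?B (X n - X N)" using N that pval_ge_mono by fastforce
    show "pval_ge p ?B (X N)" using pval_ge_rat_pval pval_ge_mono by (metis min.cobounded2)
  qed
  then have "\<forall>\<^sub>F n in sequentially. pval_ge p ?B (X n)"
    by (auto simp: eventually_sequentially)
  then show thesis by (rule that)
qed

lemma padic_null_add:
  assumes "prime p" "padic_null p X" "padic_null p Y" shows "padic_null p (\<lambda>n. X n + Y n)"
  unfolding padic_null_iff
proof
  fix k
  have "\<forall>\<^sub>F n in sequentially. pval_ge p k (X n)" "\<forall>\<^sub>F n in sequentially. pval_ge p k (Y n)"
    using assms(2,3) by (simp_all add: padic_null_iff)
  then show "\<forall>\<^sub>F n in sequentially. pval_ge p k (X n + Y n)"
    by eventually_elim (rule pval_ge_add[OF assms(1)])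
qed

lemma padic_null_minus: "prime p \<Longrightarrow> padic_null p (\<lambda>n. - X n) \<longleftrightarrow> padic_null p X"
  by (simp add: padic_null_iff pval_ge_minus)

lemma padic_null_eventually_0: "\<forall>\<^sub>F n in sequentially. X n = 0 \<Longrightarrow> padic_null p X"
  unfolding padic_null_iff by (auto elim: eventually_mono)

lemma padic_null_mult_bounded:
  assumes "prime p" "padic_null p X" "\<forall>\<^sub>F n in sequentially. pval_ge p B (Y n)"
  shows "padic_null p (\<lambda>n. X n * Y n)"
  unfolding padic_null_iff
proof
  fix k
  have "\<forall>\<^sub>F n in sequentially. pval_ge p (k - B) (X n)" using assms(2) by (simp add: padic_null_iff)
  with assms(3) show "\<forall>\<^sub>F n in sequentially. pval_ge p k (X n * Y n)"
    by eventually_elim (use pval_ge_mult[OF assms(1)] in fastforce)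
qed

lemma padic_cauchy_mult:
  assumes "prime p" "padic_cauchy p X" "padic_cauchy p Y"
  shows "padic_cauchy p (\<lambda>n. X n * Y n)"
  unfolding padic_cauchy_iff
proof
  fix k
  obtain BX where "\<forall>\<^sub>F n in sequentially. pval_ge p BX (X n)"
    using assms(1,2) by (rule padic_cauchy_bounded)
  then obtain M1 where M1: "\<forall>n\<ge>M1. pval_ge p BX (X n)" by (auto simp: eventually_sequentially)
  obtain BY where "\<forall>\<^sub>F n in sequentially. pval_ge p BY (Y n)"
    using assms(1,3) by (rule padic_cauchy_bounded)
  then obtain M2 where M2: "\<forall>n\<ge>M2. pval_ge p BY (Y n)" by (auto simp: eventually_sequentially)
  obtain N1 where N1: "\<forall>m\<ge>N1. \<forall>n\<ge>N1. pval_ge p (k - BX) (Y m - Y n)"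
    using assms(3) unfolding padic_cauchy_iff by blast
  obtain N2 where N2: "\<forall>m\<ge>N2. \<forall>n\<ge>N2. pval_ge p (k - BY) (X m - X n)"
    using assms(2) unfolding padic_cauchy_iff by blast
  let ?N = "max (max M1 M2) (max N1 N2)"
  have "pval_ge p k (X m * Y m - X n * Y n)" if "m \<ge> ?N" "n \<ge> ?N" for m n
  proof -
    have "pval_ge p k (X m * (Y m - Y n))" "pval_ge p k ((X m - X n) * Y n)"
      using pval_ge_mult[OF assms(1), of BX "X m" "k - BX"]
        pval_ge_mult[OF assms(1), of "k - BY" _ BY "Y n"] M1 M2 N1 N2 that
      by simp_all
    from pval_ge_add[OF assms(1) this] show ?thesis by (simp add: algebra_simps)
  qed
  then show "\<exists>N. \<forall>m\<ge>N. \<forall>n\<ge>N. pval_ge p k (X m * Y m - X n * Y n)" by blast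
qed

lemma equiv_padic_rel: "prime p \<Longrightarrow> equiv {X. padic_cauchy p X} (padic_rel p)"
proof (rule equivI)
  assume p: "prime p"
  show "padic_rel p \<subseteq> {X. padic_cauchy p X} \<times> {X. padic_cauchy p X}"
    by (auto simp: padic_rel_def)
  show "refl_on {X. padic_cauchy p X} (padic_rel p)"
    by (auto simp: refl_on_def padic_rel_def intro: padic_null_eventually_0)
  show "sym (padic_rel p)"
    using padic_null_minus[OF p] by (fastforce simp: sym_def padic_rel_def)
  show "trans (padic_rel p)"
    unfolding trans_def padic_rel_def
    using padic_null_add[OF p, of "\<lambda>n. _ n - _ n" "\<lambda>n. _ n - _ n"] by fastforce
qed

lemma padic_rel_mult:
  assumes "prime p" "(X, X') \<in> padic_rel p" "(Y, Y') \<in> padic_rel p"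
  shows "(\<lambda>n. X n * Y n, \<lambda>n. X' n * Y' n) \<in> padic_rel p"
proof -
  have cauchy: "padic_cauchy p X" "padic_cauchy p X'" "padic_cauchy p Y" "padic_cauchy p Y'"
    and null: "padic_null p (\<lambda>n. X n - X' n)" "padic_null p (\<lambda>n. Y n - Y' n)"
    using assms(2,3) by (auto simp: padic_rel_def)
  obtain BX where BX: "\<forall>\<^sub>F n in sequentially. pval_ge p BX (X n)"
    using assms(1) cauchy(1) by (rule padic_cauchy_bounded)
  obtain BY where BY: "\<forall>\<^sub>F n in sequentially. pval_ge p BY (Y' n)"
    using assms(1) cauchy(4) by (rule padic_cauchy_bounded)
  have "padic_null p (\<lambda>n. (Y n - Y' n) * X n + (X n - X' n) * Y' n)"
    using padic_null_add[OF assms(1) padic_null_mult_bounded[OF assms(1) null(2) BX]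
        padic_null_mult_bounded[OF assms(1) null(1) BY]] .
  then have "padic_null p (\<lambda>n. X n * Y n - X' n * Y' n)"
    by (simp add: algebra_simps)
  with cauchy show ?thesis
    by (simp add: padic_rel_def padic_cauchy_mult[OF assms(1)])
qed

definition has_eventual_pval :: "nat \<Rightarrow> (nat \<Rightarrow> rat) \<Rightarrow> int \<Rightarrow> bool" where
  "has_eventual_pval p X k \<longleftrightarrow> (\<forall>\<^sub>F n in sequentially. X n \<noteq> 0 \<and> rat_pval p (X n) = k)"

lemma has_eventual_pval_unique:
  "has_eventual_pval p X k \<Longrightarrow> has_eventual_pval p X j \<Longrightarrow> k = j"
  unfolding has_eventual_pval_def
  by (drule (1) eventually_conj) (auto dest: eventually_happens)

lemma has_eventual_pval_not_null:
  assumes "has_eventual_pval p X k" shows "\<not> padic_null p X"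
proof
  assume "padic_null p X"
  then have "\<forall>\<^sub>F n in sequentially. pval_ge p (k + 1) (X n)" by (simp add: padic_null_iff)
  with assms have "\<forall>\<^sub>F n in sequentially. False"
    unfolding has_eventual_pval_def by eventually_elim (auto simp: pval_ge_def)
  then show False by simp
qed

text \<open>Once the terms of a non-null Cauchy sequence are closer to each other than to \<open>0\<close>,
  the strict triangle inequality freezes their valuation.\<close>
lemma padic_cauchy_has_eventual_pval:
  assumes "prime p" "padic_cauchy p X" "\<not> padic_null p X"
  obtains k where "has_eventual_pval p X k"
proof -
  obtain k where k: "\<not> (\<forall>\<^sub>F n in sequentially. pval_ge p k (X n))"
    using assms(3) by (auto simp: padic_null_iff)
  obtain N where N: "\<forall>m\<ge>N. \<forall>n\<ge>N. pval_ge p k (X m - X n)"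
    using assms(2) unfolding padic_cauchy_iff by blast
  obtain n0 where n0: "n0 \<ge> N" "\<not> pval_ge p k (X n0)"
    using k by (auto simp: eventually_sequentially)
  then have "X n0 \<noteq> 0" "rat_pval p (X n0) < k" by (auto simp: pval_ge_def)
  from rat_pval_add_eq[OF assms(1) this] N n0(1)
  have "X n \<noteq> 0 \<and> rat_pval p (X n) = rat_pval p (X n0)" if "n \<ge> N" for n
    using that by (metis add.commute diff_add_cancel)
  then have "has_eventual_pval p X (rat_pval p (X n0))"
    by (auto simp: has_eventual_pval_def eventually_sequentially)
  then show thesis by (rule that)
qed

lemma has_eventual_pval_padic_rel:
  assumes "prime p" "has_eventual_pval p X k" "(X, Y) \<in> padic_rel p"
  shows "has_eventual_pval p Y k"
proof -
  have "padic_null p (\<lambda>n. Y n - X n)"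
    using assms(3) padic_null_minus[OF assms(1), of "\<lambda>n. X n - Y n"] by (simp add: padic_rel_def)
  then have "\<forall>\<^sub>F n in sequentially. pval_ge p (k + 1) (Y n - X n)"
    by (simp add: padic_null_iff)
  with assms(2) show ?thesis
    unfolding has_eventual_pval_def
    by eventually_elim (use rat_pval_add_eq[OF assms(1), of _ "k + 1"] in force)
qed

lemma has_eventual_pval_mult:
  "prime p \<Longrightarrow> has_eventual_pval p X k \<Longrightarrow> has_eventual_pval p Y j
    \<Longrightarrow> has_eventual_pval p (\<lambda>n. X n * Y n) (k + j)"
  unfolding has_eventual_pval_def by (auto elim: eventually_elim2 simp: rat_pval_mult)

lemma has_eventual_pval_inverse:
  "prime p \<Longrightarrow> has_eventual_pval p X k \<Longrightarrow> has_eventual_pval p (\<lambda>n. inverse (X n)) (- k)"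
  unfolding has_eventual_pval_def by (auto elim: eventually_mono simp: rat_pval_inverse)

lemma padic_cauchy_inverse:
  assumes "prime p" "padic_cauchy p X" "has_eventual_pval p X k"
  shows "padic_cauchy p (\<lambda>n. inverse (X n))"
  unfolding padic_cauchy_iff
proof
  fix t
  obtain N1 where N1: "\<forall>n\<ge>N1. X n \<noteq> 0 \<and> rat_pval p (X n) = k"
    using assms(3) by (auto simp: has_eventual_pval_def eventually_sequentially)
  obtain N2 where N2: "\<forall>m\<ge>N2. \<forall>n\<ge>N2. pval_ge p (t + 2 * k) (X n - X m)"
    using assms(2) unfolding padic_cauchy_iff by blast
  have "pval_ge p t (inverse (X m) - inverse (X n))" if "m \<ge> max N1 N2" "n \<ge> max N1 N2" for m n
  proof -
    have "pval_ge p (t + 2 * k + - k + - k) ((X n - X m) * inverse (X m) * inverse (X n))"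
      using N1 N2 that
      by (intro pval_ge_mult assms(1)) (auto simp: pval_ge_def rat_pval_inverse[OF assms(1)])
    moreover have "(X n - X m) * inverse (X m) * inverse (X n) = inverse (X m) - inverse (X n)"
      using N1 that by (auto simp: field_simps)
    ultimately show ?thesis by simp
  qed
  then show "\<exists>N. \<forall>m\<ge>N. \<forall>n\<ge>N. pval_ge p t (inverse (X m) - inverse (X n))" by blast
qed

abbreviation qp_class :: "nat \<Rightarrow> (nat \<Rightarrow> rat) \<Rightarrow> (nat \<Rightarrow> rat) set" where
  "qp_class p X \<equiv> padic_rel p `` {X}"

lemma qp_class_in_Qp: "padic_cauchy p X \<Longrightarrow> qp_class p X \<in> Qp p"
  unfolding Qp_def by (rule quotientI) simp

lemma Qp_cases:
  assumes "c \<in> Qp p" obtains X where "padic_cauchy p X" "c = qp_class p X"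
  using assms unfolding Qp_def by (auto elim!: quotientE)

lemma padic_rel_eventually_eq:
  "padic_cauchy p X \<Longrightarrow> padic_cauchy p Y \<Longrightarrow> \<forall>\<^sub>F n in sequentially. X n = Y n
    \<Longrightarrow> (X, Y) \<in> padic_rel p"
  unfolding padic_rel_def by (auto intro: padic_null_eventually_0 elim: eventually_mono)

lemma qp_val_class_null:
  assumes "padic_cauchy p X" "padic_null p X"
  shows "qp_val p (qp_class p X) = ZInf"
  using assms by (simp add: qp_val_def padic_rel_def padic_cauchy_const)

lemma qp_val_class_has_eventual_pval:
  assumes "prime p" "padic_cauchy p X" "has_eventual_pval p X k"
  shows "qp_val p (qp_class p X) = ZFin k"
proof -
  have "(\<lambda>n. 0) \<notin> qp_class p X"
    using has_eventual_pval_not_null[OF assms(3)] by (simp add: padic_rel_def)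
  moreover have "has_eventual_pval p (SOME Y. Y \<in> qp_class p X) k"
    using assms some_in_equiv_class[OF equiv_padic_rel] by (blast intro: has_eventual_pval_padic_rel)
  then have "(THE k. has_eventual_pval p (SOME Y. Y \<in> qp_class p X) k) = k"
    using has_eventual_pval_unique by blast
  ultimately show ?thesis
    by (simp add: qp_val_def has_eventual_pval_def eventually_sequentially)
qed

lemma qp_val_class_eq_ZInf_iff:
  assumes "prime p" "padic_cauchy p X"
  shows "qp_val p (qp_class p X) = ZInf \<longleftrightarrow> padic_null p X"
  using assms qp_val_class_null qp_val_class_has_eventual_pval padic_cauchy_has_eventual_pval
  by (metis zinf.distinct(1))

lemma qp_val_class_eq_ZFin_iff:
  assumes "prime p" "padic_cauchy p X"
  shows "qp_val p (qp_class p X) = ZFin k \<longleftrightarrow> has_eventual_pval p X k"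
  using assms qp_val_class_null qp_val_class_has_eventual_pval padic_cauchy_has_eventual_pval
  by (metis zinf.distinct(1) zinf.inject)

lemma qp_mult_class:
  assumes "prime p" "padic_cauchy p X" "padic_cauchy p Y"
  shows "qp_mult p (qp_class p X) (qp_class p Y) = qp_class p (\<lambda>n. X n * Y n)"
  unfolding qp_mult_def
  by (rule equiv_class_of_op_on_some_reps[OF equiv_padic_rel]) (use assms padic_rel_mult in auto)

lemma qp_mult_in_Qp: "prime p \<Longrightarrow> c \<in> Qp p \<Longrightarrow> d \<in> Qp p \<Longrightarrow> qp_mult p c d \<in> Qp p"
  by (elim Qp_cases) (simp add: qp_mult_class qp_class_in_Qp padic_cauchy_mult)

lemma qp_val_mult:
  assumes "prime p" "c \<in> Qp p" "d \<in> Qp p"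
  shows "qp_val p (qp_mult p c d) = zadd (qp_val p c) (qp_val p d)"
proof -
  obtain X where X: "padic_cauchy p X" "c = qp_class p X" using assms(2) by (rule Qp_cases)
  obtain Y where Y: "padic_cauchy p Y" "d = qp_class p Y" using assms(3) by (rule Qp_cases)
  have XY: "padic_cauchy p (\<lambda>n. X n * Y n)" "qp_mult p c d = qp_class p (\<lambda>n. X n * Y n)"
    using X Y by (simp_all add: qp_mult_class assms(1) padic_cauchy_mult)
  show ?thesis
  proof (cases "padic_null p X \<or> padic_null p Y")
    case True
    obtain BX where BX: "\<forall>\<^sub>F n in sequentially. pval_ge p BX (X n)"
      using assms(1) X(1) by (rule padic_cauchy_bounded)
    obtain BY where BY: "\<forall>\<^sub>F n in sequentially. pval_ge p BY (Y n)"
      using assms(1) Y(1) by (rule padic_cauchy_bounded)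
    have "padic_null p (\<lambda>n. X n * Y n)"
      using True padic_null_mult_bounded[OF assms(1) _ BY, of X]
        padic_null_mult_bounded[OF assms(1) _ BX, of Y]
      by (auto simp: mult.commute)
    with True X Y XY show ?thesis
      by (cases "qp_val p c"; cases "qp_val p d") (auto simp: qp_val_class_null)
  next
    case False
    then obtain k j where "has_eventual_pval p X k" "has_eventual_pval p Y j"
      using assms(1) X(1) Y(1) by (metis padic_cauchy_has_eventual_pval)
    with assms(1) X Y XY show ?thesis
      by (simp add: qp_val_class_has_eventual_pval has_eventual_pval_mult)
  qed
qed

lemma qp_of_rat_in_Qp: "qp_of_rat p q \<in> Qp p"
  unfolding qp_of_rat_def by (rule qp_class_in_Qp[OF padic_cauchy_const])

lemma qp_val_of_rat: "prime p \<Longrightarrow> q \<noteq> 0 \<Longrightarrow> qp_val p (qp_of_rat p q) = ZFin (rat_pval p q)"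
  unfolding qp_of_rat_def
  by (simp add: qp_val_class_has_eventual_pval padic_cauchy_const has_eventual_pval_def)

lemma ex_qp_val_eq:
  assumes "prime p" shows "\<exists>c\<in>Qp p. qp_val p c = z"
proof (cases z)
  case (ZFin k)
  obtain x where "x \<noteq> 0" "rat_pval p x = k" using ex_rat_pval_eq[OF assms] by blast
  with ZFin show ?thesis using assms qp_val_of_rat qp_of_rat_in_Qp by metis
next
  case ZInf
  then have "qp_val p (qp_of_rat p 0) = z"
    unfolding qp_of_rat_def by (simp add: qp_val_class_null padic_cauchy_const padic_null_iff)
  then show ?thesis using qp_of_rat_in_Qp by blast
qed

text \<open>For \<open>v(X) = v(Y) = k < \<infinity>\<close> the unit is represented by \<open>Y/X\<close>, which is Cauchy
  because \<open>|X n|\<^sub>p\<close> is eventually constant.\<close>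
lemma qp_val_eq_imp_unit_multiple:
  assumes "prime p" "c \<in> Qp p" "d \<in> Qp p" "qp_val p c = qp_val p d"
  shows "\<exists>u\<in>Zp_units p. qp_mult p c u = d"
proof -
  obtain X where X: "padic_cauchy p X" "c = qp_class p X" using assms(2) by (rule Qp_cases)
  obtain Y where Y: "padic_cauchy p Y" "d = qp_class p Y" using assms(3) by (rule Qp_cases)
  note class_eq = equiv_class_eq[OF equiv_padic_rel[OF assms(1)]]
  show ?thesis
  proof (cases "qp_val p c")
    case ZInf
    then have "qp_val p (qp_class p X) = ZInf" "qp_val p (qp_class p Y) = ZInf"
      using assms(4) X Y by simp_all
    then have "padic_null p X" "padic_null p (\<lambda>n. - Y n)"
      using assms(1) X(1) Y(1) by (simp_all add: qp_val_class_eq_ZInf_iff padic_null_minus)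
    from padic_null_add[OF assms(1) this] have "(X, Y) \<in> padic_rel p"
      using X(1) Y(1) by (simp add: padic_rel_def)
    then have "qp_mult p c (qp_of_rat p 1) = d"
      using qp_mult_class[OF assms(1) X(1) padic_cauchy_const, of 1] X Y class_eq
      by (simp add: qp_of_rat_def)
    moreover have "qp_of_rat p 1 \<in> Zp_units p"
      using assms(1) by (simp add: Zp_units_def qp_of_rat_in_Qp qp_val_of_rat)
    ultimately show ?thesis by blast
  next
    case (ZFin k)
    then have "qp_val p (qp_class p X) = ZFin k" "qp_val p (qp_class p Y) = ZFin k"
      using assms(4) X Y by simp_all
    then have vX: "has_eventual_pval p X k" and vY: "has_eventual_pval p Y k"
      using assms(1) X(1) Y(1) by (simp_all add: qp_val_class_eq_ZFin_iff)
    define U where "U = (\<lambda>n. inverse (X n) * Y n)"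
    have U: "padic_cauchy p U"
      unfolding U_def
      by (rule padic_cauchy_mult[OF assms(1) padic_cauchy_inverse[OF assms(1) X(1) vX] Y(1)])
    have "has_eventual_pval p U (- k + k)"
      unfolding U_def
      by (rule has_eventual_pval_mult[OF assms(1) has_eventual_pval_inverse[OF assms(1) vX] vY])
    then have "qp_class p U \<in> Zp_units p"
      using assms(1) U by (simp add: Zp_units_def qp_class_in_Qp qp_val_class_has_eventual_pval)
    moreover have "\<forall>\<^sub>F n in sequentially. X n * U n = Y n"
      using vX unfolding has_eventual_pval_def U_def by (auto elim: eventually_mono)
    then have "(\<lambda>n. X n * U n, Y) \<in> padic_rel p"
      by (rule padic_rel_eventually_eq[OF padic_cauchy_mult[OF assms(1) X(1) U] Y(1)])
    then have "qp_mult p c (qp_class p U) = d"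
      using qp_mult_class[OF assms(1) X(1) U] X Y class_eq by simp
    ultimately show ?thesis by blast
  qed
qed

section \<open>Divisors and finite adeles\<close>

interpretation zadd: comm_monoid zadd "ZFin 0"
proof
  fix x y z show "zadd (zadd x y) z = zadd x (zadd y z)" by (cases x; cases y; cases z) simp_all
  show "zadd x y = zadd y x" by (cases x; cases y) simp_all
  show "zadd x (ZFin 0) = x" by (cases x) simp_all
qed

lemma zadd_ZFin_cancel [simp]: "zadd (zadd x (ZFin (- k))) (ZFin k) = x"
  by (cases x) simp_all

lemma zneg_zadd: "zneg (zadd x y) \<Longrightarrow> zneg x \<or> zneg y"
  by (cases x; cases y) auto

lemma div_add_in_divisors: "D \<in> divisors \<Longrightarrow> E \<in> divisors \<Longrightarrow> div_add D E \<in> divisors"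
  unfolding divisors_def div_add_def
  by (auto dest: zneg_zadd
      intro: rev_finite_subset[of "{p. prime p \<and> zneg (D p)} \<union> {p. prime p \<and> zneg (E p)}"])

lemma equiv_lin_equiv: "equiv divisors lin_equiv"
proof (rule equivI)
  show "lin_equiv \<subseteq> divisors \<times> divisors"
    by (auto simp: lin_equiv_def)
  show "refl_on divisors lin_equiv"
    by (auto simp: refl_on_def lin_equiv_def intro!: exI[of _ 1])
  show "sym lin_equiv"
  proof (rule symI)
    fix D D' assume "(D, D') \<in> lin_equiv"
    then obtain q where "D \<in> divisors" "D' \<in> divisors" "q \<noteq> 0"
      "\<forall>p. prime p \<longrightarrow> D p = zadd (D' p) (ZFin (- rat_pval p q))"
      by (auto simp: lin_equiv_def)
    then show "(D', D) \<in> lin_equiv"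
      unfolding lin_equiv_def
      by (auto intro!: exI[of _ "inverse q"] simp: rat_pval_inverse)
  qed
  show "trans lin_equiv"
  proof (rule transI)
    fix D D' D'' assume "(D, D') \<in> lin_equiv" "(D', D'') \<in> lin_equiv"
    then obtain q r where "D \<in> divisors" "D'' \<in> divisors" "q \<noteq> 0" "r \<noteq> 0"
      "\<forall>p. prime p \<longrightarrow> D p = zadd (D' p) (ZFin (- rat_pval p q))"
      "\<forall>p. prime p \<longrightarrow> D' p = zadd (D'' p) (ZFin (- rat_pval p r))"
      by (auto simp: lin_equiv_def)
    then show "(D, D'') \<in> lin_equiv"
      unfolding lin_equiv_def
      by (auto intro!: exI[of _ "q * r"] simp: rat_pval_mult zadd.assoc add.commute)
  qed
qed

lemma lin_equiv_div_add:
  assumes "(D, D') \<in> lin_equiv" "(E, E') \<in> lin_equiv"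
  shows "(div_add D E, div_add D' E') \<in> lin_equiv"
proof -
  obtain q r where "D \<in> divisors" "D' \<in> divisors" "E \<in> divisors" "E' \<in> divisors" "q \<noteq> 0" "r \<noteq> 0"
    "\<forall>p. prime p \<longrightarrow> D p = zadd (D' p) (ZFin (- rat_pval p q))"
    "\<forall>p. prime p \<longrightarrow> E p = zadd (E' p) (ZFin (- rat_pval p r))"
    using assms by (auto simp: lin_equiv_def)
  then show ?thesis
    unfolding lin_equiv_def
    by (simp add: div_add_in_divisors)
      (auto intro!: exI[of _ "q * r"] simp: div_add_def rat_pval_mult zadd.assoc zadd.left_commute)
qed

lemma divisor_of_adele_in_divisors: "a \<in> finite_adeles \<Longrightarrow> divisor_of_adele a \<in> divisors"
  unfolding finite_adeles_def divisors_def divisor_of_adele_def Zp_def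
  by (auto elim!: rev_finite_subset)

lemma divisor_of_adele_image: "divisor_of_adele ` finite_adeles = divisors"
proof (intro subset_antisym subsetI)
  fix D assume D: "D \<in> divisors"
  define a where "a = (\<lambda>p. if prime p then SOME c. c \<in> Qp p \<and> qp_val p c = D p else {})"
  have a: "a p \<in> Qp p" "qp_val p (a p) = D p" if "prime p" for p
    using someI_ex[OF ex_qp_val_eq[OF that, of "D p", unfolded Bex_def]] that by (simp_all add: a_def)
  then have "{p. prime p \<and> a p \<notin> Zp p} = {p. prime p \<and> zneg (D p)}"
    by (auto simp: Zp_def)
  with D a have "a \<in> finite_adeles"
    by (auto simp: finite_adeles_def divisors_def a_def)
  moreover have "divisor_of_adele a = D"
    using D a by (auto simp: divisor_of_adele_def divisors_def)
  ultimately show "D \<in> divisor_of_adele ` finite_adeles" by blast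
qed (auto intro: divisor_of_adele_in_divisors)

lemma adele_mult_component:
  assumes "a \<in> finite_adeles" "b \<in> finite_adeles" "prime p"
  shows "adele_mult a b p \<in> Qp p" "qp_val p (adele_mult a b p) = zadd (qp_val p (a p)) (qp_val p (b p))"
  using assms by (simp_all add: finite_adeles_def adele_mult_def qp_mult_in_Qp qp_val_mult)

lemma divisor_of_adele_mult:
  assumes "a \<in> finite_adeles" "b \<in> finite_adeles"
  shows "divisor_of_adele (adele_mult a b) = div_add (divisor_of_adele a) (divisor_of_adele b)"
proof (rule ext)
  fix p
  show "divisor_of_adele (adele_mult a b) p = div_add (divisor_of_adele a) (divisor_of_adele b) p"
    using adele_mult_component[OF assms, of p] by (simp add: divisor_of_adele_def div_add_def)
qed

lemma adele_mult_in_finite_adeles: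
  assumes "a \<in> finite_adeles" "b \<in> finite_adeles"
  shows "adele_mult a b \<in> finite_adeles"
proof -
  have "{p. prime p \<and> adele_mult a b p \<notin> Zp p}
      \<subseteq> {p. prime p \<and> a p \<notin> Zp p} \<union> {p. prime p \<and> b p \<notin> Zp p}"
  proof
    fix p assume "p \<in> {p. prime p \<and> adele_mult a b p \<notin> Zp p}"
    then have p: "prime p" and "zneg (zadd (qp_val p (a p)) (qp_val p (b p)))"
      using adele_mult_component[OF assms] by (auto simp: Zp_def)
    from this(2) have "zneg (qp_val p (a p)) \<or> zneg (qp_val p (b p))" by (rule zneg_zadd)
    with p show "p \<in> {p. prime p \<and> a p \<notin> Zp p} \<union> {p. prime p \<and> b p \<notin> Zp p}"
      by (auto simp: Zp_def)
  qed
  moreover have "finite ({p. prime p \<and> a p \<notin> Zp p} \<union> {p. prime p \<and> b p \<notin> Zp p})"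
    using assms by (simp add: finite_adeles_def)
  ultimately show ?thesis
    using adele_mult_component(1)[OF assms] by (simp add: finite_adeles_def adele_mult_def finite_subset)
qed

lemma adele_of_rat_1:
  "adele_of_rat 1 \<in> finite_adeles" "divisor_of_adele (adele_of_rat 1) = (\<lambda>p. ZFin 0)"
  by (auto simp: finite_adeles_def divisor_of_adele_def adele_of_rat_def Zp_def qp_of_rat_in_Qp
      qp_val_of_rat)

lemma adele_rel_imp_lin_equiv:
  assumes "(a, b) \<in> adele_rel"
  shows "(divisor_of_adele a, divisor_of_adele b) \<in> lin_equiv"
proof -
  obtain q u where a: "a \<in> finite_adeles" and b: "b \<in> finite_adeles" and "q \<noteq> 0" "u \<in> Zhat_units"
    and b_eq: "b = adele_mult (adele_mult (adele_of_rat q) a) u"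
    using assms by (auto simp: adele_rel_def)
  have "divisor_of_adele a p = zadd (divisor_of_adele b p) (ZFin (- rat_pval p q))" if p: "prime p" for p
  proof -
    have "a p \<in> Qp p" "u p \<in> Qp p" "qp_val p (u p) = ZFin 0"
      using a \<open>u \<in> Zhat_units\<close> p by (auto simp: finite_adeles_def Zhat_units_def Zp_units_def)
    then have "qp_val p (b p) = zadd (ZFin (rat_pval p q)) (qp_val p (a p))"
      using p \<open>q \<noteq> 0\<close> by (simp add: b_eq adele_mult_def adele_of_rat_def qp_val_mult qp_mult_in_Qp
          qp_of_rat_in_Qp qp_val_of_rat)
    with p show ?thesis by (cases "qp_val p (a p)") (simp_all add: divisor_of_adele_def)
  qed
  with a b \<open>q \<noteq> 0\<close> show ?thesis
    by (auto simp: lin_equiv_def divisor_of_adele_in_divisors)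
qed

lemma lin_equiv_imp_adele_rel:
  assumes a: "a \<in> finite_adeles" and b: "b \<in> finite_adeles"
    and "(divisor_of_adele a, divisor_of_adele b) \<in> lin_equiv"
  shows "(a, b) \<in> adele_rel"
proof -
  obtain q where "q \<noteq> 0"
    and div: "\<forall>p. prime p \<longrightarrow>
      divisor_of_adele a p = zadd (divisor_of_adele b p) (ZFin (- rat_pval p q))"
    using assms(3) by (auto simp: lin_equiv_def)
  have "\<exists>v\<in>Zp_units p. qp_mult p (qp_mult p (qp_of_rat p q) (a p)) v = b p" if p: "prime p" for p
  proof (rule qp_val_eq_imp_unit_multiple[OF p])
    have "a p \<in> Qp p" "b p \<in> Qp p" using a b p by (auto simp: finite_adeles_def)
    then show "qp_mult p (qp_of_rat p q) (a p) \<in> Qp p" "b p \<in> Qp p"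
      using p by (simp_all add: qp_mult_in_Qp qp_of_rat_in_Qp)
    show "qp_val p (qp_mult p (qp_of_rat p q) (a p)) = qp_val p (b p)"
      using div p \<open>q \<noteq> 0\<close> \<open>a p \<in> Qp p\<close>
      by (cases "qp_val p (b p)")
        (simp_all add: divisor_of_adele_def qp_val_mult qp_of_rat_in_Qp qp_val_of_rat)
  qed
  then obtain v where v: "\<And>p. prime p \<Longrightarrow>
      v p \<in> Zp_units p \<and> qp_mult p (qp_mult p (qp_of_rat p q) (a p)) (v p) = b p"
    by metis
  define u where "u = (\<lambda>p. if prime p then v p else {})"
  have "u \<in> Zhat_units" using v by (simp add: Zhat_units_def u_def)
  moreover have "b = adele_mult (adele_mult (adele_of_rat q) a) u"
  proof
    fix p show "b p = adele_mult (adele_mult (adele_of_rat q) a) u p"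
      using v[of p] b
      by (cases "prime p") (simp_all add: adele_mult_def adele_of_rat_def u_def finite_adeles_def)
  qed
  ultimately show ?thesis
    using a b \<open>q \<noteq> 0\<close> by (auto simp: adele_rel_def)
qed

lemma adele_rel_iff_lin_equiv:
  "(a, b) \<in> adele_rel \<longleftrightarrow>
    a \<in> finite_adeles \<and> b \<in> finite_adeles \<and> (divisor_of_adele a, divisor_of_adele b) \<in> lin_equiv"
  using adele_rel_imp_lin_equiv lin_equiv_imp_adele_rel by (auto simp: adele_rel_def)

lemma adele_rel_adele_mult:
  assumes "(a, a') \<in> adele_rel" "(b, b') \<in> adele_rel"
  shows "(adele_mult a b, adele_mult a' b') \<in> adele_rel"
  using assms lin_equiv_div_add
  by (auto simp: adele_rel_iff_lin_equiv adele_mult_in_finite_adeles divisor_of_adele_mult)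

lemma equiv_adele_rel: "equiv finite_adeles adele_rel"
  using equiv_pullback[OF equiv_lin_equiv _ adele_rel_iff_lin_equiv] divisor_of_adele_image by blast

lemma Phi_adele_class: "a \<in> finite_adeles \<Longrightarrow> Phi (adele_rel``{a}) = lin_equiv``{divisor_of_adele a}"
  unfolding Phi_def
  using UN_pullback_class[OF equiv_lin_equiv _ adele_rel_iff_lin_equiv] divisor_of_adele_image by blast

lemma class_mult_adele_class:
  "a \<in> finite_adeles \<Longrightarrow> b \<in> finite_adeles \<Longrightarrow>
    class_mult (adele_rel``{a}) (adele_rel``{b}) = adele_rel``{adele_mult a b}"
  unfolding class_mult_def
  by (rule equiv_class_of_op_on_some_reps[OF equiv_adele_rel]) (simp_all add: adele_rel_adele_mult)

lemma pic_add_lin_equiv_class: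
  "D \<in> divisors \<Longrightarrow> E \<in> divisors \<Longrightarrow>
    pic_add (lin_equiv``{D}) (lin_equiv``{E}) = lin_equiv``{div_add D E}"
  unfolding pic_add_def
  by (rule equiv_class_of_op_on_some_reps[OF equiv_lin_equiv]) (simp_all add: lin_equiv_div_add)

theorem proposition2p11:
  shows "bij_betw Phi adele_classes Pic
    \<and> (\<forall>X\<in>adele_classes. \<forall>Y\<in>adele_classes. Phi (class_mult X Y) = pic_add (Phi X) (Phi Y))
    \<and> Phi class_one = pic_zero"
proof (intro conjI ballI)
  show "bij_betw Phi adele_classes Pic"
    unfolding adele_classes_def Pic_def Phi_def[abs_def]
    by (rule bij_betw_pullback_quotients[OF equiv_lin_equiv divisor_of_adele_image
          adele_rel_iff_lin_equiv])
next
  fix X Y assume "X \<in> adele_classes" "Y \<in> adele_classes"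
  then obtain a b where "a \<in> finite_adeles" "b \<in> finite_adeles" "X = adele_rel``{a}" "Y = adele_rel``{b}"
    unfolding adele_classes_def by (auto elim!: quotientE)
  then show "Phi (class_mult X Y) = pic_add (Phi X) (Phi Y)"
    by (simp add: class_mult_adele_class Phi_adele_class pic_add_lin_equiv_class
        adele_mult_in_finite_adeles divisor_of_adele_mult divisor_of_adele_in_divisors)
next
  show "Phi class_one = pic_zero"
    using adele_of_rat_1 by (simp add: class_one_def pic_zero_def Phi_adele_class)
qed

end
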